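(* Let $n\ge2$, let $\mathbf{x}=(x_1,\dots,x_n)^T\in\mathbb{C}^n$ with $x_i\neq x_j$ for all $i\neq j$, let $F$, $p$ and $F''$ be as in the context, and put \[ W_l=\frac{p(x_l)}{\prod_{j=1,\,j\neq l}^n(x_l-x_j)},\qquad l=1,\dots,n,\qquad \mathbf{d}=F'(\mathbf{x})^{-1}F(\mathbf{x}). \] Then $\mathbf{d}=(W_1,\dots,W_n)^T$ and, for $j=1,\dots,n$, \[ \Big(F'(\mathbf{x})^{-1}\,F''(\mathbf{x})(\mathbf{d},\mathbf{d})\Big)_j=2\,W_j\sum_{\nu=1,\,\nu\neq j}^n\frac{W_\nu}{x_\nu-x_j}. \]
   Context: Let $p(t)=t^n+a_{n-1}t^{n-1}+\dots+a_1t+a_0$ be a monic polynomial of degree $n$ with real coefficients, and set $\mathbf{a}=(a_0,a_1,\dots,a_{n-1})^T$. Define $V=(v_1,\dots,v_n)^T:\mathbb{C}^n\to\mathbb{C}^n$ by \[ v_{n-\nu+1}(\mathbf{x})=\sum_{i_1<i_2<\dots<i_\nu}(-x_{i_1})(-x_{i_2})\cdots(-x_{i_\nu}),\qquad \nu=1,\dots,n, \] (the sum running over all $\nu$-element index sets $\{i_1<\dots<i_\nu\}\subseteq\{1,\dots,n\}$), so that $\prod_{j=1}^n(t-x_j)=t^n+\sum_{j=0}^{n-1}v_{j+1}(\mathbf{x})t^j$. Define $F=(f_1,\dots,f_n)^T:\mathbb{C}^n\to\mathbb{C}^n$ by $F(\mathbf{x})=V(\mathbf{x})-\mathbf{a}$,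 with Jacobian $F'(\mathbf{x})$. For $k=1,\dots,n$, $A^{(k)}(\mathbf{x})\in\mathbb{C}^{n\times n}$ is the matrix whose $(i,l)$ entry is $\partial^2 f_i(\mathbf{x})/\partial x_l\partial x_k$, and the second derivative is the bilinear map $F''(\mathbf{x})(\mathbf{y},\mathbf{z})=\sum_{k=1}^n z_k\,A^{(k)}(\mathbf{x})\,\mathbf{y}$ for $\mathbf{y},\mathbf{z}\in\mathbb{C}^n$, i.e. $F''(\mathbf{x})(\mathbf{y},\mathbf{z})_i=\sum_{k,l}\frac{\partial^2 f_i(\mathbf{x})}{\partial x_l\partial x_k}y_l z_k$. *)

theory Defs
  imports "HOL-Analysis.Analysis" "Jordan_Normal_Form.Matrix"
begin

(* Indices are 0-based: paper index i corresponds to i-1 here.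
   Points x in C^n are functions nat => complex; only x 0 .. x (n-1) matter. *)

(* V component k (0-based, k < n) = paper's v_{k+1} = coefficient of t^k,
   i.e. paper's v_{n-nu+1} with nu = n - k: sum over nu-element index sets. *)
definition Vmap :: "nat \<Rightarrow> (nat \<Rightarrow> complex) \<Rightarrow> nat \<Rightarrow> complex" where
  "Vmap n x k = (\<Sum>S\<in>{S. S \<subseteq> {0..<n} \<and> card S = n - k}. \<Prod>i\<in>S. - x i)"

definition Fmap :: "nat \<Rightarrow> (nat \<Rightarrow> real) \<Rightarrow> (nat \<Rightarrow> complex) \<Rightarrow> nat \<Rightarrow> complex" where
  "Fmap n a x k = Vmap n x k - of_real (a k)"

definition ppoly :: "nat \<Rightarrow> (nat \<Rightarrow> real) \<Rightarrow> complex \<Rightarrow> complex" where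
  "ppoly n a t = t ^ n + (\<Sum>j<n. of_real (a j) * t ^ j)"

definition partial :: "((nat \<Rightarrow> complex) \<Rightarrow> complex) \<Rightarrow> nat \<Rightarrow> (nat \<Rightarrow> complex) \<Rightarrow> complex" where
  "partial g l x = deriv (\<lambda>t. g (x(l := t))) (x l)"

definition jac :: "nat \<Rightarrow> (nat \<Rightarrow> real) \<Rightarrow> (nat \<Rightarrow> complex) \<Rightarrow> complex mat" where
  "jac n a x = mat n n (\<lambda>(i, l). partial (\<lambda>y. Fmap n a y i) l x)"

definition hess :: "nat \<Rightarrow> (nat \<Rightarrow> real) \<Rightarrow> (nat \<Rightarrow> complex) \<Rightarrow> complex vec \<Rightarrow> complex vec \<Rightarrow> complex vec" where
  "hess n a x y z = vec n (\<lambda>i. \<Sum>k<n. \<Sum>l<n.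
      partial (\<lambda>w. partial (\<lambda>u. Fmap n a u i) k w) l x * (y $ l) * (z $ k))"

definition Wgt :: "nat \<Rightarrow> (nat \<Rightarrow> real) \<Rightarrow> (nat \<Rightarrow> complex) \<Rightarrow> nat \<Rightarrow> complex" where
  "Wgt n a x l = ppoly n a (x l) / (\<Prod>j\<in>{0..<n} - {l}. (x l - x j))"

end

theory Submission
  imports Defs "Jordan_Normal_Form.Determinant" "HOL-Computational_Algebra.Polynomial"
begin

text \<open>
  Identify a vector \<open>v \<in> \<complex>\<^sup>n\<close> with the polynomial \<open>\<Sum>i<n. v\<^sub>i t\<^sup>i\<close>. Since \<open>V(x)\<close> is the
  coefficient vector of \<open>\<omega>(t) = \<Prod>j. (t - x\<^sub>j)\<close>, the columns of \<open>F'(x)\<close> are the coefficient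
  vectors of \<open>-\<omega>(t) / (t - x\<^sub>l)\<close>, i.e. of the Lagrange basis up to the scalars \<open>-\<omega>'(x\<^sub>l)\<close>.
  So \<open>F'(x)\<close> is invertible for distinct nodes, and the \<open>m\<close>-th component of \<open>F'(x)\<^sup>-\<^sup>1 w\<close> is
  \<open>-w(x\<^sub>m) / \<omega>'(x\<^sub>m)\<close>. For \<open>w = F(x)\<close> we have \<open>w(x\<^sub>m) = -p(x\<^sub>m)\<close>, giving \<open>d = W\<close>. For
  \<open>w = F''(x)(d,d)\<close>, \<open>w(t) = \<Sum>k\<noteq>l. d\<^sub>k d\<^sub>l \<omega>(t) / ((t - x\<^sub>k)(t - x\<^sub>l))\<close>, and at \<open>t = x\<^sub>m\<close> only the
  terms with \<open>m \<in> {k, l}\<close> survive, each equal to \<open>d\<^sub>m d\<^sub>v \<omega>'(x\<^sub>m) / (x\<^sub>m - x\<^sub>v)\<close>.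
\<close>

section \<open>Node polynomials\<close>

definition node_poly :: "('b \<Rightarrow> 'a::comm_ring_1) \<Rightarrow> 'b set \<Rightarrow> 'a poly" where
  "node_poly x A = (\<Prod>j\<in>A. [:- x j, 1:])"

lemma poly_node_poly: "poly (node_poly x A) t = (\<Prod>j\<in>A. t - x j)"
  unfolding node_poly_def poly_prod by simp

lemma poly_node_poly_node: "finite A \<Longrightarrow> m \<in> A \<Longrightarrow> poly (node_poly x A) (x m) = 0"
  unfolding poly_node_poly by (rule prod_zero) auto

lemma degree_node_poly:
  "finite A \<Longrightarrow> degree (node_poly x A :: 'a::idom poly) = card A"
  unfolding node_poly_def by (subst degree_prod_eq_sum_degree) auto

lemma coeff_node_poly_card: "coeff (node_poly x A :: 'a::idom poly) (card A) = 1"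
proof (cases "finite A")
  case True
  then show ?thesis
    using lead_coeff_prod[of "\<lambda>j. [:- x j, 1:]" A] degree_node_poly[OF True, of x]
    unfolding node_poly_def by simp
qed (simp add: node_poly_def)

lemma node_poly_remove:
  "finite A \<Longrightarrow> l \<in> A \<Longrightarrow> node_poly x A = [:- x l, 1:] * node_poly x (A - {l})"
  unfolding node_poly_def by (simp add: prod.remove)

lemma node_poly_fun_upd_notin: "l \<notin> A \<Longrightarrow> node_poly (x(l := t)) A = node_poly x A"
  unfolding node_poly_def by (intro prod.cong) auto

lemma poly_node_poly_remove_at_node:
  fixes x :: "'b \<Rightarrow> 'a::field"
  assumes "finite A" "v \<in> A" "x m \<noteq> x v"
  shows "poly (node_poly x (A - {v})) (x m) = poly (node_poly x A) (x m) / (x m - x v)"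
  using assms by (simp add: node_poly_remove[OF assms(1,2)] field_simps)

lemma poly_node_poly_remove_node_ne_0:
  fixes x :: "'b \<Rightarrow> 'a::idom"
  assumes "inj_on x A" "m \<in> A"
  shows "poly (node_poly x (A - {m})) (x m) \<noteq> 0"
  unfolding poly_node_poly using assms by (cases "finite A") (auto simp: prod_zero_iff inj_on_def)

lemma node_poly_eq_sum_monom:
  assumes "finite A"
  shows "node_poly x A = (\<Sum>X\<in>Pow A. monom (\<Prod>j\<in>X. - x j) (card (A - X)))"
proof -
  have "node_poly x A = (\<Prod>j\<in>A. [:- x j:] + [:0, 1:])"
    unfolding node_poly_def by (intro prod.cong) auto
  also have "\<dots> = (\<Sum>X\<in>Pow A. (\<Prod>j\<in>X. [:- x j:]) * (\<Prod>j\<in>A - X. [:0, 1:]))"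
    by (rule prod_add[OF assms])
  also have "\<dots> = (\<Sum>X\<in>Pow A. monom (\<Prod>j\<in>X. - x j) (card (A - X)))"
    by (intro sum.cong refl) (simp add: prod_to_poly monom_altdef)
  finally show ?thesis .
qed

lemma Vmap_eq_coeff_node_poly:
  assumes "k \<le> n"
  shows "Vmap n x k = coeff (node_poly x {0..<n}) k"
proof -
  have card_iff: "card ({0..<n} - X) = k \<longleftrightarrow> card X = n - k" if "X \<subseteq> {0..<n}" for X
  proof -
    have "finite X" using that finite_subset by blast
    moreover have "card X \<le> n" using that card_mono[of "{0..<n}" X] by auto
    ultimately show ?thesis using that assms by (simp add: card_Diff_subset, arith)
  qed
  have "coeff (node_poly x {0..<n}) k =
      (\<Sum>X\<in>Pow {0..<n}. if card ({0..<n} - X) = k then \<Prod>j\<in>X. - x j else 0)"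
    unfolding node_poly_eq_sum_monom[OF finite_atLeastLessThan] coeff_sum coeff_monom
    by (auto intro!: sum.cong)
  also have "\<dots> = (\<Sum>X\<in>{X\<in>Pow {0..<n}. card ({0..<n} - X) = k}. \<Prod>j\<in>X. - x j)"
    by (rule sum.inter_filter[symmetric]) simp
  also have "{X\<in>Pow {0..<n}. card ({0..<n} - X) = k} = {S. S \<subseteq> {0..<n} \<and> card S = n - k}"
    using card_iff by auto
  finally show ?thesis unfolding Vmap_def by simp
qed

lemma has_field_derivative_coeff_node_poly_fun_upd:
  assumes "finite A" "l \<in> A"
  shows "((\<lambda>t. coeff (node_poly (x(l := t)) A) i)
           has_field_derivative - coeff (node_poly x (A - {l})) i) (at s)"
proof -
  have upd_eq: "node_poly (x(l := t)) A = [:- t, 1:] * node_poly x (A - {l})" for t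
    unfolding node_poly_remove[OF assms, of "x(l := t)"] by (simp add: node_poly_fun_upd_notin)
  have "coeff (node_poly (x(l := t)) A) i =
      coeff (pCons 0 (node_poly x (A - {l}))) i - t * coeff (node_poly x (A - {l})) i" for t
    unfolding upd_eq by (simp add: algebra_simps)
  then show ?thesis
    by (simp only:) (auto intro!: derivative_eq_intros)
qed

lemma partial_Fmap:
  assumes "l < n" "k < n"
  shows "partial (\<lambda>y. Fmap n a y k) l x = - coeff (node_poly x ({0..<n} - {l})) k"
proof -
  have "((\<lambda>t. Fmap n a (x(l := t)) k)
          has_field_derivative - coeff (node_poly x ({0..<n} - {l})) k) (at (x l))"
    unfolding Fmap_def Vmap_eq_coeff_node_poly[OF less_imp_le[OF assms(2)]]
    using assms by (auto intro!: derivative_eq_intros has_field_derivative_coeff_node_poly_fun_upd)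
  then show ?thesis unfolding partial_def by (rule DERIV_imp_deriv)
qed

lemma partial_partial_Fmap:
  assumes "l < n" "k < n" "i < n"
  shows "partial (\<lambda>w. partial (\<lambda>u. Fmap n a u i) k w) l x =
    (if l = k then 0 else coeff (node_poly x ({0..<n} - {k} - {l})) i)"
proof (cases "l = k")
  case True
  have "partial (\<lambda>u. Fmap n a u i) k (x(l := t)) = - coeff (node_poly x ({0..<n} - {k})) i" for t
    using True assms by (simp add: partial_Fmap node_poly_fun_upd_notin)
  then show ?thesis unfolding partial_def using True by simp
next
  case False
  have "((\<lambda>t. partial (\<lambda>u. Fmap n a u i) k (x(l := t)))
      has_field_derivative coeff (node_poly x ({0..<n} - {k} - {l})) i) (at (x l))"
    unfolding partial_Fmap[OF assms(2,3)]
    using assms False by (auto intro!: derivative_eq_intros has_field_derivative_coeff_node_poly_fun_upd)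
  then show ?thesis unfolding partial_def using False by (simp add: DERIV_imp_deriv)
qed

section \<open>Vectors as coefficient vectors\<close>

definition poly_vec :: "nat \<Rightarrow> 'a::comm_semiring_1 vec \<Rightarrow> 'a \<Rightarrow> 'a" where
  "poly_vec n v t = (\<Sum>i<n. v $ i * t ^ i)"

lemma poly_eq_sum_coeff_lessThan:
  fixes p :: "'a::comm_semiring_1 poly"
  assumes "degree p < n"
  shows "poly p t = (\<Sum>i<n. coeff p i * t ^ i)"
proof -
  have "poly p t = (\<Sum>i\<le>degree p. coeff p i * t ^ i)"
    by (rule poly_altdef)
  also have "\<dots> = (\<Sum>i<n. coeff p i * t ^ i)"
    using assms by (intro sum.mono_neutral_left) (auto simp: coeff_eq_0)
  finally show ?thesis .
qed

lemma poly_vec_lincomb: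
  assumes "finite L" and "\<And>l. l \<in> L \<Longrightarrow> degree (p l) < n"
    and "\<And>i. i < n \<Longrightarrow> v $ i = (\<Sum>l\<in>L. c l * coeff (p l) i)"
  shows "poly_vec n v t = (\<Sum>l\<in>L. c l * poly (p l) t)"
proof -
  have "poly_vec n v t = (\<Sum>i<n. \<Sum>l\<in>L. c l * (coeff (p l) i * t ^ i))"
    unfolding poly_vec_def by (simp add: assms(3) sum_distrib_right mult.assoc)
  also have "\<dots> = (\<Sum>l\<in>L. c l * (\<Sum>i<n. coeff (p l) i * t ^ i))"
    by (simp add: sum.swap[of _ "{..<n}"] sum_distrib_left)
  also have "\<dots> = (\<Sum>l\<in>L. c l * poly (p l) t)"
    by (intro sum.cong refl) (simp add: poly_eq_sum_coeff_lessThan[OF assms(2)])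
  finally show ?thesis .
qed

lemma poly_vec_Fmap:
  "poly_vec n (vec n (Fmap n a x)) t = poly (node_poly x {0..<n}) t - ppoly n a t"
proof -
  have "poly (node_poly x {0..<n}) t = (\<Sum>i<Suc n. coeff (node_poly x {0..<n}) i * t ^ i)"
    by (intro poly_eq_sum_coeff_lessThan) (simp add: degree_node_poly)
  also have "\<dots> = (\<Sum>i<n. coeff (node_poly x {0..<n}) i * t ^ i) + t ^ n"
    using coeff_node_poly_card[of x "{0..<n}"] by simp
  finally have "poly (node_poly x {0..<n}) t - t ^ n = (\<Sum>i<n. Vmap n x i * t ^ i)"
    by (simp add: Vmap_eq_coeff_node_poly)
  then show ?thesis
    unfolding poly_vec_def ppoly_def Fmap_def by (simp add: algebra_simps sum_subtractf)
qed

lemma degree_node_poly_remove_lt: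
  "k < n \<Longrightarrow> degree (node_poly x ({0..<n} - {k} - B) :: 'a::idom poly) < n"
  using card_mono[of "{0..<n} - {k}" "{0..<n} - {k} - B"] by (simp add: degree_node_poly)

lemma poly_vec_jac_mult:
  assumes "y \<in> carrier_vec n"
  shows "poly_vec n (jac n a x *\<^sub>v y) t =
    (\<Sum>l<n. - y $ l * poly (node_poly x ({0..<n} - {l})) t)"
proof (rule poly_vec_lincomb)
  fix i assume "i < n"
  then show "(jac n a x *\<^sub>v y) $ i = (\<Sum>l<n. - y $ l * coeff (node_poly x ({0..<n} - {l})) i)"
    using assms unfolding jac_def
    by (simp add: scalar_prod_def partial_Fmap atLeast0LessThan mult.commute)
qed (use degree_node_poly_remove_lt[where B = "{}"] in auto)

lemma poly_vec_hess:
  assumes "d \<in> carrier_vec n"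
  shows "poly_vec n (hess n a x d d) t =
    (\<Sum>(k, l)\<in>{..<n} \<times> {..<n}.
       (if l = k then 0 else d $ l * d $ k) * poly (node_poly x ({0..<n} - {k} - {l})) t)"
proof -
  define c where "c = (\<lambda>(k, l). if l = k then 0 else d $ l * d $ k)"
  define p where "p = (\<lambda>(k, l). node_poly x ({0..<n} - {k} - {l}))"
  have "poly_vec n (hess n a x d d) t = (\<Sum>kl\<in>{..<n} \<times> {..<n}. c kl * poly (p kl) t)"
  proof (rule poly_vec_lincomb)
    fix i assume "i < n"
    then show "hess n a x d d $ i = (\<Sum>kl\<in>{..<n} \<times> {..<n}. c kl * coeff (p kl) i)"
      unfolding hess_def sum.cartesian_product c_def p_def
      by (auto simp: partial_partial_Fmap intro!: sum.cong)
  qed (auto simp: p_def degree_node_poly_remove_lt)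
  then show ?thesis unfolding c_def p_def by (simp add: case_prod_beta)
qed

lemma poly_vec_jac_mult_node:
  assumes "y \<in> carrier_vec n" "m < n"
  shows "poly_vec n (jac n a x *\<^sub>v y) (x m) = - y $ m * poly (node_poly x ({0..<n} - {m})) (x m)"
proof -
  have "(\<Sum>l\<in>{..<n} - {m}. - y $ l * poly (node_poly x ({0..<n} - {l})) (x m)) = 0"
    using assms by (intro sum.neutral) (auto simp: poly_node_poly_node)
  then show ?thesis
    unfolding poly_vec_jac_mult[OF assms(1)] using assms(2) by (simp add: sum.remove[of _ m])
qed

lemma sum_pairs_through:
  fixes g :: "nat \<times> nat \<Rightarrow> 'a::comm_monoid_add"
  assumes "m < n" and "\<And>k l. k = l \<or> k \<noteq> m \<and> l \<noteq> m \<Longrightarrow> g (k, l) = 0"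
  shows "sum g ({..<n} \<times> {..<n}) = (\<Sum>v\<in>{..<n} - {m}. g (m, v) + g (v, m))"
proof -
  define R where "R = {..<n} - {m}"
  have "sum g ({..<n} \<times> {..<n}) = sum g (Pair m ` R \<union> (\<lambda>v. (v, m)) ` R)"
  proof (rule sum.mono_neutral_right)
    show "\<forall>kl\<in>{..<n} \<times> {..<n} - (Pair m ` R \<union> (\<lambda>v. (v, m)) ` R). g kl = 0"
    proof
      fix kl assume kl: "kl \<in> {..<n} \<times> {..<n} - (Pair m ` R \<union> (\<lambda>v. (v, m)) ` R)"
      obtain k l where [simp]: "kl = (k, l)" by fastforce
      have "k = l \<or> k \<noteq> m \<and> l \<noteq> m"
      proof (rule ccontr)
        assume "\<not> (k = l \<or> k \<noteq> m \<and> l \<noteq> m)"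
        then have "k = m \<and> l \<in> R \<or> l = m \<and> k \<in> R"
          using kl by (auto simp: R_def)
        then show False
          using kl by auto
      qed
      then show "g kl = 0"
        using assms(2) by simp
    qed
  qed (auto simp: R_def assms(1))
  also have "\<dots> = sum g (Pair m ` R) + sum g ((\<lambda>v. (v, m)) ` R)"
    by (rule sum.union_disjoint) (auto simp: R_def)
  also have "\<dots> = (\<Sum>v\<in>R. g (m, v)) + (\<Sum>v\<in>R. g (v, m))"
    by (simp add: sum.reindex inj_on_def)
  finally show ?thesis
    unfolding R_def by (simp add: sum.distrib)
qed

lemma sum_pairs_node_poly_at_node:
  fixes x :: "nat \<Rightarrow> 'a::comm_ring_1"
  assumes "m < n"
  shows "(\<Sum>(k, l)\<in>{..<n} \<times> {..<n}.
      (if l = k then 0 else d $ l * d $ k) * poly (node_poly x ({0..<n} - {k} - {l})) (x m)) =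
    2 * d $ m * (\<Sum>v\<in>{0..<n} - {m}. d $ v * poly (node_poly x ({0..<n} - {m} - {v})) (x m))"
  (is "sum ?g _ = _")
proof -
  have "sum ?g ({..<n} \<times> {..<n}) = (\<Sum>v\<in>{..<n} - {m}. ?g (m, v) + ?g (v, m))"
  proof (rule sum_pairs_through[OF assms])
    fix k l assume "k = l \<or> k \<noteq> m \<and> l \<noteq> m"
    then show "?g (k, l) = 0"
      using assms poly_node_poly_node[of "{0..<n} - {k} - {l}" m x] by auto
  qed
  also have "\<dots> = (\<Sum>v\<in>{0..<n} - {m}.
      2 * (d $ m * (d $ v * poly (node_poly x ({0..<n} - {m} - {v})) (x m))))"
  proof (rule sum.cong)
    fix v assume v: "v \<in> {0..<n} - {m}"
    define X where "X = d $ m * (d $ v * poly (node_poly x ({0..<n} - {m} - {v})) (x m))"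
    have "{0..<n} - {v} - {m} = {0..<n} - {m} - {v}"
      by blast
    then have "?g (m, v) = X" "?g (v, m) = X"
      using v by (auto simp: X_def mult_ac)
    then show "?g (m, v) + ?g (v, m) = 2 * X"
      by (simp only: mult_2)
  qed (auto simp: atLeast0LessThan)
  finally show ?thesis
    by (simp add: sum_distrib_left mult.assoc)
qed

section \<open>The inverse Jacobian\<close>

lemma jac_carrier_mat: "jac n a x \<in> carrier_mat n n"
  unfolding jac_def by simp

lemma invertible_jac:
  assumes "inj_on x {0..<n}"
  shows "invertible_mat (jac n a x)"
proof -
  note J = jac_carrier_mat[of n a x]
  have "y = 0\<^sub>v n" if y: "y \<in> carrier_vec n" "jac n a x *\<^sub>v y = 0\<^sub>v n" for y
  proof (rule eq_vecI)
    fix m assume "m < dim_vec (0\<^sub>v n)"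
    then have m: "m < n" by simp
    have "poly_vec n (jac n a x *\<^sub>v y) (x m) = 0"
      unfolding y(2) poly_vec_def by simp
    then have "y $ m * poly (node_poly x ({0..<n} - {m})) (x m) = 0"
      unfolding poly_vec_jac_mult_node[OF y(1) m] by simp
    then show "y $ m = 0\<^sub>v n $ m"
      using poly_node_poly_remove_node_ne_0[OF assms, of m] m by simp
  qed (use y in simp)
  then have "det (jac n a x) \<noteq> 0"
    unfolding det_0_iff_vec_prod_zero_field[OF J] by blast
  from det_non_zero_imp_unit[OF J this, of "()"]
  obtain C where "C \<in> carrier_mat n n" "jac n a x * C = 1\<^sub>m n" "C * jac n a x = 1\<^sub>m n"
    unfolding Units_def ring_mat_def by auto
  then show ?thesis
    unfolding invertible_mat_def inverts_mat_def using J by auto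
qed

lemma right_inverse_jac_mult_nth:
  assumes "inj_on x {0..<n}"
    and "B \<in> carrier_mat n n" "jac n a x * B = 1\<^sub>m n" "w \<in> carrier_vec n" "m < n"
  shows "(B *\<^sub>v w) $ m = - poly_vec n w (x m) / poly (node_poly x ({0..<n} - {m})) (x m)"
proof -
  have "jac n a x *\<^sub>v (B *\<^sub>v w) = w"
    using jac_carrier_mat[of n a x] assms(2-4) by (simp flip: assoc_mult_mat_vec)
  then have "poly_vec n w (x m) = poly_vec n (jac n a x *\<^sub>v (B *\<^sub>v w)) (x m)"
    by simp
  also have "\<dots> = - (B *\<^sub>v w) $ m * poly (node_poly x ({0..<n} - {m})) (x m)"
    using assms(2,4,5) by (intro poly_vec_jac_mult_node) auto
  finally have "poly_vec n w (x m) = - (B *\<^sub>v w) $ m * poly (node_poly x ({0..<n} - {m})) (x m)" .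
  then show ?thesis
    using poly_node_poly_remove_node_ne_0[OF assms(1), of m] assms(5) by (simp add: field_simps)
qed

lemma right_inverse_jac_mult_Fmap:
  assumes "inj_on x {0..<n}"
    and "B \<in> carrier_mat n n" "jac n a x * B = 1\<^sub>m n"
  shows "B *\<^sub>v vec n (Fmap n a x) = vec n (Wgt n a x)"
proof (rule eq_vecI)
  fix m assume "m < dim_vec (vec n (Wgt n a x))"
  then have m: "m < n" by simp
  have "poly_vec n (vec n (Fmap n a x)) (x m) = - ppoly n a (x m)"
    unfolding poly_vec_Fmap using m by (simp add: poly_node_poly_node)
  then show "(B *\<^sub>v vec n (Fmap n a x)) $ m = vec n (Wgt n a x) $ m"
    using right_inverse_jac_mult_nth[OF assms vec_carrier m] m
    by (simp add: Wgt_def poly_node_poly)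
qed (use assms(2) in simp)

lemma right_inverse_jac_mult_hess_nth:
  assumes "inj_on x {0..<n}"
    and "B \<in> carrier_mat n n" "jac n a x * B = 1\<^sub>m n" "d \<in> carrier_vec n" "j < n"
  shows "(B *\<^sub>v hess n a x d d) $ j = 2 * d $ j * (\<Sum>v\<in>{0..<n} - {j}. d $ v / (x v - x j))"
proof -
  define L where "L = poly (node_poly x ({0..<n} - {j})) (x j)"
  have L: "L \<noteq> 0"
    unfolding L_def using poly_node_poly_remove_node_ne_0[OF assms(1), of j] assms(5) by simp
  have "poly_vec n (hess n a x d d) (x j) =
      2 * d $ j * (\<Sum>v\<in>{0..<n} - {j}. d $ v * poly (node_poly x ({0..<n} - {j} - {v})) (x j))"
    unfolding poly_vec_hess[OF assms(4)] by (rule sum_pairs_node_poly_at_node[OF assms(5)])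
  also have "\<dots> = 2 * d $ j * (\<Sum>v\<in>{0..<n} - {j}. d $ v * (L / (x j - x v)))"
  proof -
    have "x j \<noteq> x v" if "v \<in> {0..<n} - {j}" for v
      using that assms(1,5) by (auto dest: inj_onD)
    then show ?thesis
      unfolding L_def by (intro arg_cong[where f = "\<lambda>s. 2 * d $ j * s"] sum.cong refl)
        (simp add: poly_node_poly_remove_at_node)
  qed
  also have "\<dots> = - L * (2 * d $ j * (\<Sum>v\<in>{0..<n} - {j}. d $ v / (x v - x j)))"
    by (simp add: sum_distrib_left sum_negf[symmetric] minus_divide_right mult_ac)
  finally show ?thesis
    using right_inverse_jac_mult_nth[OF assms(1-3) _ assms(5), of "hess n a x d d"] L
    unfolding L_def by (simp add: hess_def)
qed

theorem mainTheorem6: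
  fixes n :: nat and a :: "nat \<Rightarrow> real" and x :: "nat \<Rightarrow> complex"
  assumes "n \<ge> 2"
    and "\<And>i j. i < n \<Longrightarrow> j < n \<Longrightarrow> i \<noteq> j \<Longrightarrow> x i \<noteq> x j"
  shows "invertible_mat (jac n a x) \<and>
    (\<forall>B \<in> carrier_mat n n. inverts_mat (jac n a x) B \<longrightarrow>
      (let d = B *\<^sub>v vec n (Fmap n a x) in
         d = vec n (Wgt n a x) \<and>
         (\<forall>j<n. (B *\<^sub>v hess n a x d d) $ j =
            2 * Wgt n a x j * (\<Sum>\<nu>\<in>{0..<n} - {j}. Wgt n a x \<nu> / (x \<nu> - x j)))))"
proof (intro conjI ballI impI)
  have inj: "inj_on x {0..<n}"
    using assms(2) unfolding inj_on_def by fastforce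
  then show "invertible_mat (jac n a x)"
    by (rule invertible_jac)
  fix B assume B: "B \<in> carrier_mat n n" "inverts_mat (jac n a x) B"
  then have JB: "jac n a x * B = 1\<^sub>m n"
    using jac_carrier_mat[of n a x] by (simp add: inverts_mat_def)
  show "let d = B *\<^sub>v vec n (Fmap n a x) in
         d = vec n (Wgt n a x) \<and>
         (\<forall>j<n. (B *\<^sub>v hess n a x d d) $ j =
            2 * Wgt n a x j * (\<Sum>\<nu>\<in>{0..<n} - {j}. Wgt n a x \<nu> / (x \<nu> - x j)))"
    unfolding Let_def right_inverse_jac_mult_Fmap[OF inj B(1) JB]
    using right_inverse_jac_mult_hess_nth[OF inj B(1) JB vec_carrier] by simp
qed

end
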